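(* Consider the fully discrete implicit variable-step BDF2 scheme described in the context and let $\{u^n\}$ be its solution. Suppose the time-step ratios satisfy $r_k\le r_s$ for $2\le k\le N$ and \[ \tau_n<4\delta\min\Big\{R_L(r_n,r_{n+1}),\ \frac{2+r_2}{1+r_2}\Big\},\qquad 1\le n\le N, \] where $R_L(z,s)=\frac{2+4z-z^{3/2}}{1+z}-\frac{s^{3/2}}{1+s}$ (with $r_1:=0$). Then there is a constant $C_0$, independent of the spatial step $h$ and the time steps $\tau_n$, such that \[ \max\{\|\nabla_hu^n\|,\ \|\nabla_hu^n\|_{l^4},\ \|\Delta_hu^n\|\}\le C_0 . \]
   Context: Let $L>0$, $\Omega=(0,L)^2$, $M$ a positive integer, $h=L/M$, $x_i=ih$, $y_j=jh$, $\Omega_h=\{(x_i,y_j):1\le i,j\le M\}$, $\bar\Omega_h=\{(x_i,y_j):0\le i,j\le M\}$, and $\mathbb{V}_h$ the space of grid functions on $\bar\Omega_h$ that are $L$-periodic in each direction. For $v\in\mathbb{V}_h$: $\delta_x v_{i+1/2,j}=(v_{i+1,j}-v_{ij})/h$, $\Delta_x v_{ij}=(v_{i+1,j}-v_{i-1,j})/(2h)$, $\delta_x^2 v_{ij}=(\delta_xv_{i+1/2,j}-\delta_xv_{i-1/2,j})/h$, and analogously in $y$; $\Delta_h=\delta_x^2+\delta_y^2$, $\nabla_h v_{ij}=(\Delta_x v_{ij},\Delta_y v_{ij})^T$, and for a vector grid function $\mathbf{g}=(g_1,g_2)$, $\nabla_h\cdot \mathbf g=\Delta_x g_1+\Delta_y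 g_2$. Inner product $\langle v,w\rangle=h^2\sum_{\mathrm{x}_h\in\Omega_h}v_hw_h$, $\|v\|=\sqrt{\langle v,v\rangle}$, $\|v\|_{l^q}=(h^2\sum_{\mathrm{x}_h\in\Omega_h}|v_h|^q)^{1/q}$; for vector grid functions the pointwise Euclidean norm is used inside. Let $f(\mathbf{v})=(|\mathbf v|^2-1)\mathbf v$ and $\delta>0$. Time levels $0=t_0<t_1<\dots<t_N=T$, $\tau_n=t_n-t_{n-1}$, $r_n=\tau_n/\tau_{n-1}$ ($2\le n\le N$); $r_{N+1}\in(0,r_s]$ is an auxiliary ratio. $\nabla_\tau v^n=v^n-v^{n-1}$. BDF2 kernels: $b_0^{(1)}=2/\tau_1$, and for $n\ge2$, $b_0^{(n)}=\frac{1+2r_n}{\tau_n(1+r_n)}$, $b_1^{(n)}=-\frac{r_n^2}{\tau_n(1+r_n)}$, $b_j^{(n)}=0$ for $j\ge2$; $D_2v^n=\sum_{k=1}^n b_{n-k}^{(n)}\nabla_\tau v^k$. The scheme is: $D_2u_h^n+\delta\Delta_h^2u_h^n-\nabla_h\cdot f(\nabla_hu_h^n)=0$ for $\mathrm{x}_h\in\Omega_h$, $1\le n\le N$, with $u_h^0=\varphi_0(\mathrm{x}_h)-\frac{\tau_1}{2}\varphi_1(\mathrm{x}_h)$, $\varphi_1=\nabla\cdot f(\nabla\varphi_0)-\delta\Delta^2\varphi_0$ for given periodic smooth data $\varphi_0\in H^4(\Omega)$. $r_s$ is a fixed constant with $0<r_s<4.864$. *)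

theory Defs
  imports "HOL-Analysis.Analysis"
begin

definition pdx :: "(real \<times> real \<Rightarrow> real) \<Rightarrow> real \<times> real \<Rightarrow> real" where
  "pdx g = (\<lambda>(x,y). deriv (\<lambda>s. g (s,y)) x)"

definition pdy :: "(real \<times> real \<Rightarrow> real) \<Rightarrow> real \<times> real \<Rightarrow> real" where
  "pdy g = (\<lambda>(x,y). deriv (\<lambda>s. g (x,s)) y)"

text \<open>Smooth (C-infinity) functions on the plane: there is a class of continuous functions,
  containing g, which is closed under taking (existing) partial derivatives.\<close>
definition smooth_fun :: "(real \<times> real \<Rightarrow> real) \<Rightarrow> bool" where
  "smooth_fun g \<longleftrightarrow> (\<exists>S. g \<in> S \<and> (\<forall>f\<in>S. continuous_on UNIV f
      \<and> (\<forall>x y. (\<lambda>s. f (s,y)) differentiable (at x) \<and> (\<lambda>s. f (x,s)) differentiable (at y))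
      \<and> pdx f \<in> S \<and> pdy f \<in> S))"

definition periodic_L :: "real \<Rightarrow> (real \<times> real \<Rightarrow> real) \<Rightarrow> bool" where
  "periodic_L L g \<longleftrightarrow> (\<forall>x y. g (x+L, y) = g (x,y) \<and> g (x, y+L) = g (x,y))"

definition lap_c :: "(real \<times> real \<Rightarrow> real) \<Rightarrow> real \<times> real \<Rightarrow> real" where
  "lap_c g = (\<lambda>p. pdx (pdx g) p + pdy (pdy g) p)"

definition phi1 :: "real \<Rightarrow> (real \<times> real \<Rightarrow> real) \<Rightarrow> real \<times> real \<Rightarrow> real" where
  "phi1 \<delta> g = (let f1 = (\<lambda>p. ((pdx g p)\<^sup>2 + (pdy g p)\<^sup>2 - 1) * pdx g p);
                  f2 = (\<lambda>p. ((pdx g p)\<^sup>2 + (pdy g p)\<^sup>2 - 1) * pdy g p)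
              in (\<lambda>p. pdx f1 p + pdy f2 p - \<delta> * lap_c (lap_c g) p))"

section \<open>Grid functions (indexed by integers i, j; periodicity imposed separately)\<close>

type_synonym grid = "int \<Rightarrow> int \<Rightarrow> real"

definition grid_periodic :: "nat \<Rightarrow> grid \<Rightarrow> bool" where
  "grid_periodic M v \<longleftrightarrow> (\<forall>i j. v (i + int M) j = v i j \<and> v i (j + int M) = v i j)"

definition Dxc :: "real \<Rightarrow> grid \<Rightarrow> grid" where
  "Dxc h v = (\<lambda>i j. (v (i+1) j - v (i-1) j) / (2*h))"
definition Dyc :: "real \<Rightarrow> grid \<Rightarrow> grid" where
  "Dyc h v = (\<lambda>i j. (v i (j+1) - v i (j-1)) / (2*h))"

definition dxx :: "real \<Rightarrow> grid \<Rightarrow> grid" where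
  "dxx h v = (\<lambda>i j. ((v (i+1) j - v i j)/h - (v i j - v (i-1) j)/h) / h)"
definition dyy :: "real \<Rightarrow> grid \<Rightarrow> grid" where
  "dyy h v = (\<lambda>i j. ((v i (j+1) - v i j)/h - (v i j - v i (j-1))/h) / h)"

definition lap_h :: "real \<Rightarrow> grid \<Rightarrow> grid" where
  "lap_h h v = (\<lambda>i j. dxx h v i j + dyy h v i j)"

definition divf_h :: "real \<Rightarrow> grid \<Rightarrow> grid" where
  "divf_h h v = (let g1 = (\<lambda>i j. ((Dxc h v i j)\<^sup>2 + (Dyc h v i j)\<^sup>2 - 1) * Dxc h v i j);
                     g2 = (\<lambda>i j. ((Dxc h v i j)\<^sup>2 + (Dyc h v i j)\<^sup>2 - 1) * Dyc h v i j)
                 in (\<lambda>i j. Dxc h g1 i j + Dyc h g2 i j))"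

definition grid_sum :: "nat \<Rightarrow> real \<Rightarrow> grid \<Rightarrow> real" where
  "grid_sum M h w = h\<^sup>2 * (\<Sum>i\<in>{1..int M}. \<Sum>j\<in>{1..int M}. w i j)"

definition l2norm :: "nat \<Rightarrow> real \<Rightarrow> grid \<Rightarrow> real" where
  "l2norm M h v = sqrt (grid_sum M h (\<lambda>i j. (v i j)\<^sup>2))"

definition grad_l2norm :: "nat \<Rightarrow> real \<Rightarrow> grid \<Rightarrow> real" where
  "grad_l2norm M h v = sqrt (grid_sum M h (\<lambda>i j. (Dxc h v i j)\<^sup>2 + (Dyc h v i j)\<^sup>2))"

definition grad_l4norm :: "nat \<Rightarrow> real \<Rightarrow> grid \<Rightarrow> real" where
  "grad_l4norm M h v = root 4 (grid_sum M h (\<lambda>i j. (sqrt ((Dxc h v i j)\<^sup>2 + (Dyc h v i j)\<^sup>2)) ^ 4))"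

text \<open>Step ratios: r_1 = 0, r_n = tau_n / tau_(n-1) for 2 <= n <= N, r_(N+1) = auxiliary value.\<close>
definition ratio :: "(nat \<Rightarrow> real) \<Rightarrow> nat \<Rightarrow> real \<Rightarrow> nat \<Rightarrow> real" where
  "ratio \<tau> N rN1 n = (if n \<le> 1 then 0 else if n = N + 1 then rN1 else \<tau> n / \<tau> (n - 1))"

definition R_L :: "real \<Rightarrow> real \<Rightarrow> real" where
  "R_L z s = (2 + 4*z - z powr (3/2)) / (1 + z) - s powr (3/2) / (1 + s)"

text \<open>BDF2 operator D_2 v^n = sum_k b_(n-k)^(n) (v^k - v^(k-1)).\<close>
definition D2 :: "(nat \<Rightarrow> real) \<Rightarrow> (nat \<Rightarrow> grid) \<Rightarrow> nat \<Rightarrow> grid" where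
  "D2 \<tau> u n = (\<lambda>i j.
     (if n = 1 then (2 / \<tau> 1) * (u 1 i j - u 0 i j)
      else (let r = \<tau> n / \<tau> (n-1) in
            (1 + 2*r) / (\<tau> n * (1 + r)) * (u n i j - u (n-1) i j)
            - r\<^sup>2 / (\<tau> n * (1 + r)) * (u (n-1) i j - u (n-2) i j))))"

definition is_bdf2_solution ::
  "real \<Rightarrow> real \<Rightarrow> (real \<times> real \<Rightarrow> real) \<Rightarrow> nat \<Rightarrow> nat \<Rightarrow> (nat \<Rightarrow> real) \<Rightarrow> (nat \<Rightarrow> grid) \<Rightarrow> bool"
where
  "is_bdf2_solution L \<delta> \<phi>0 M N \<tau> u \<longleftrightarrow>
     (let h = L / real M in
      (\<forall>n\<le>N. grid_periodic M (u n)) \<and>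
      (\<forall>i\<in>{0..int M}. \<forall>j\<in>{0..int M}.
          u 0 i j = \<phi>0 (of_int i * h, of_int j * h) - \<tau> 1 / 2 * phi1 \<delta> \<phi>0 (of_int i * h, of_int j * h)) \<and>
      (\<forall>n\<in>{1..N}. \<forall>i\<in>{1..int M}. \<forall>j\<in>{1..int M}.
          D2 \<tau> u n i j + \<delta> * lap_h h (lap_h h (u n)) i j - divf_h h (u n) i j = 0))"

end

(*
  Testing the n-th step of the scheme with the increment w = u^n - u^(n-1) and summing by parts
  turns the bilaplacian and the nonlinear term into differences of delta * ||Lap_h u||^2 and of
  the double-well energy <(|grad_h u|^2 - 1)^2 / 4, 1>, up to the defect ||grad_h w||^2, which is
  at most ||w||^2 / (4 delta) + delta * ||Lap_h w||^2.  The BDF2 kernel satisfies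
    2 <D_2 u^n, w^n> >= A(r_n) ||w^n||^2 / tau_n - c(r_n) ||w^(n-1)||^2 / tau_(n-1),
  with c(s) = s^(3/2) / (1 + s) and A(r) - c(s) = R_L(r, s), so the step restriction
  tau_n < 4 delta R_L(r_n, r_(n+1)) absorbs the defect and the energy plus
  c(r_(n+1)) ||w^n||^2 / tau_n never increases.  The initial energy is bounded independently of h,
  since tau_1 <= 8 delta and difference quotients of the smooth data phi0 - tau_1/2 phi1 are bounded
  by their derivatives.  Finally the double-well energy controls ||grad_h u||_l4 and ||grad_h u||.
*)
theory Submission
  imports Defs
begin

section \<open>Smooth data and their difference quotients\<close>

definition smooth_class :: "(real \<times> real \<Rightarrow> real) set \<Rightarrow> bool" where
  "smooth_class S \<longleftrightarrow> (\<forall>f\<in>S. continuous_on UNIV f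
      \<and> (\<forall>x y. (\<lambda>s. f (s,y)) differentiable (at x) \<and> (\<lambda>s. f (x,s)) differentiable (at y))
      \<and> pdx f \<in> S \<and> pdy f \<in> S)"

lemma smooth_fun_iff_smooth_class: "smooth_fun g \<longleftrightarrow> (\<exists>S. smooth_class S \<and> g \<in> S)"
  unfolding smooth_fun_def smooth_class_def by blast

inductive alg_closure :: "(real \<times> real \<Rightarrow> real) set \<Rightarrow> (real \<times> real \<Rightarrow> real) \<Rightarrow> bool" for S where
  base: "f \<in> S \<Longrightarrow> alg_closure S f"
| const: "alg_closure S (\<lambda>p. c)"
| add: "alg_closure S f \<Longrightarrow> alg_closure S g \<Longrightarrow> alg_closure S (\<lambda>p. f p + g p)"
| mult: "alg_closure S f \<Longrightarrow> alg_closure S g \<Longrightarrow> alg_closure S (\<lambda>p. f p * g p)"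

lemma pdx_eqI: "(\<And>x y. ((\<lambda>s. f (s,y)) has_real_derivative f' (x,y)) (at x)) \<Longrightarrow> pdx f = f'"
  unfolding pdx_def by (auto intro!: ext DERIV_imp_deriv)

lemma pdy_eqI: "(\<And>x y. ((\<lambda>s. f (x,s)) has_real_derivative f' (x,y)) (at y)) \<Longrightarrow> pdy f = f'"
  unfolding pdy_def by (auto intro!: ext DERIV_imp_deriv)

lemma alg_closure_smooth:
  assumes S: "smooth_class S" and "alg_closure S f"
  shows "continuous_on UNIV f
    \<and> (\<forall>x y. ((\<lambda>s. f (s,y)) has_real_derivative pdx f (x,y)) (at x))
    \<and> (\<forall>x y. ((\<lambda>s. f (x,s)) has_real_derivative pdy f (x,y)) (at y))
    \<and> alg_closure S (pdx f) \<and> alg_closure S (pdy f)"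
  using \<open>alg_closure S f\<close>
proof (induction rule: alg_closure.induct)
  case (base f)
  then show ?case using S unfolding smooth_class_def pdx_def pdy_def
    by (auto simp: DERIV_deriv_iff_real_differentiable intro: alg_closure.base)
next
  case (const c)
  have "pdx (\<lambda>p. c) = (\<lambda>p. 0)" "pdy (\<lambda>p. c) = (\<lambda>p. 0)"
    by (auto intro: pdx_eqI pdy_eqI)
  then show ?case by (auto intro: alg_closure.const)
next
  case (add f g)
  have "pdx (\<lambda>p. f p + g p) = (\<lambda>p. pdx f p + pdx g p)"
    "pdy (\<lambda>p. f p + g p) = (\<lambda>p. pdy f p + pdy g p)"
    using add.IH by (auto intro!: pdx_eqI pdy_eqI DERIV_add)
  then show ?case using add.IH by (auto intro!: alg_closure.add continuous_intros DERIV_add)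
next
  case (mult f g)
  have "pdx (\<lambda>p. f p * g p) = (\<lambda>p. pdx f p * g p + pdx g p * f p)"
    "pdy (\<lambda>p. f p * g p) = (\<lambda>p. pdy f p * g p + pdy g p * f p)"
    using mult.IH by (auto intro!: pdx_eqI pdy_eqI DERIV_mult)
  then show ?case using mult by (auto intro!: alg_closure.add alg_closure.mult continuous_intros DERIV_mult)
qed

lemma smooth_class_alg_closure: "smooth_class S \<Longrightarrow> smooth_class (Collect (alg_closure S))"
  using alg_closure_smooth unfolding smooth_class_def[of "Collect (alg_closure S)"] real_differentiable_def
  by blast

lemma smooth_fun_of_alg_closure: "smooth_class S \<Longrightarrow> alg_closure S f \<Longrightarrow> smooth_fun f"
  using smooth_class_alg_closure unfolding smooth_fun_iff_smooth_class by blast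

lemma smooth_fun_common_class:
  assumes "smooth_fun f" "smooth_fun g"
  obtains S where "smooth_class S" "f \<in> S" "g \<in> S"
proof -
  obtain S T where "smooth_class S" "f \<in> S" "smooth_class T" "g \<in> T"
    using assms unfolding smooth_fun_iff_smooth_class by blast
  then have "smooth_class (S \<union> T)" "f \<in> S \<union> T" "g \<in> S \<union> T"
    unfolding smooth_class_def by blast+
  then show ?thesis using that by blast
qed

lemma smooth_fun_const: "smooth_fun (\<lambda>p. c)"
  by (rule smooth_fun_of_alg_closure[of "{}"]) (auto simp: smooth_class_def intro: alg_closure.const)

lemma smooth_fun_add: "smooth_fun f \<Longrightarrow> smooth_fun g \<Longrightarrow> smooth_fun (\<lambda>p. f p + g p)"
  by (metis smooth_fun_common_class smooth_fun_of_alg_closure alg_closure.base alg_closure.add)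

lemma smooth_fun_mult: "smooth_fun f \<Longrightarrow> smooth_fun g \<Longrightarrow> smooth_fun (\<lambda>p. f p * g p)"
  by (metis smooth_fun_common_class smooth_fun_of_alg_closure alg_closure.base alg_closure.mult)

lemma smooth_fun_diff: "smooth_fun f \<Longrightarrow> smooth_fun g \<Longrightarrow> smooth_fun (\<lambda>p. f p - g p)"
  using smooth_fun_add[OF _ smooth_fun_mult[OF smooth_fun_const, of g "-1"], of f] by simp

lemma smooth_fun_power2: "smooth_fun f \<Longrightarrow> smooth_fun (\<lambda>p. (f p)\<^sup>2)"
  using smooth_fun_mult[of f f] by (simp add: power2_eq_square)

lemma smooth_fun_pdx: "smooth_fun f \<Longrightarrow> smooth_fun (pdx f)"
  unfolding smooth_fun_iff_smooth_class smooth_class_def by blast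

lemma smooth_fun_pdy: "smooth_fun f \<Longrightarrow> smooth_fun (pdy f)"
  unfolding smooth_fun_iff_smooth_class smooth_class_def by blast

lemma smooth_fun_continuous: "smooth_fun f \<Longrightarrow> continuous_on UNIV f"
  unfolding smooth_fun_iff_smooth_class smooth_class_def by blast

lemma smooth_fun_has_pdx: "smooth_fun f \<Longrightarrow> ((\<lambda>s. f (s,y)) has_real_derivative pdx f (x,y)) (at x)"
  unfolding smooth_fun_iff_smooth_class smooth_class_def pdx_def
  by (auto simp: DERIV_deriv_iff_real_differentiable)

lemma smooth_fun_has_pdy: "smooth_fun f \<Longrightarrow> ((\<lambda>s. f (x,s)) has_real_derivative pdy f (x,y)) (at y)"
  unfolding smooth_fun_iff_smooth_class smooth_class_def pdy_def
  by (auto simp: DERIV_deriv_iff_real_differentiable)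

lemma smooth_fun_lap_c: "smooth_fun f \<Longrightarrow> smooth_fun (lap_c f)"
  unfolding lap_c_def by (intro smooth_fun_add smooth_fun_pdx smooth_fun_pdy)

lemma smooth_fun_phi1: "smooth_fun g \<Longrightarrow> smooth_fun (phi1 \<delta> g)"
  unfolding phi1_def Let_def
  by (intro smooth_fun_diff smooth_fun_add smooth_fun_mult smooth_fun_pdx smooth_fun_pdy
      smooth_fun_power2 smooth_fun_lap_c smooth_fun_const)

lemma deriv_shift: "deriv f (x + c) = deriv (\<lambda>s. f (s + c)) (x::real)"
  unfolding deriv_def by (simp add: DERIV_shift)

lemma periodic_L_pdx: "periodic_L L g \<Longrightarrow> periodic_L L (pdx g)"
  unfolding periodic_L_def pdx_def by (simp add: deriv_shift)

lemma periodic_L_pdy: "periodic_L L g \<Longrightarrow> periodic_L L (pdy g)"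
  unfolding periodic_L_def pdy_def by (simp add: deriv_shift)

lemma periodic_L_lap_c: "periodic_L L g \<Longrightarrow> periodic_L L (lap_c g)"
  using periodic_L_pdx periodic_L_pdy unfolding lap_c_def periodic_L_def by metis

lemma periodic_L_phi1:
  assumes g: "periodic_L L g"
  shows "periodic_L L (phi1 \<delta> g)"
proof -
  define f1 where "f1 = (\<lambda>p. ((pdx g p)\<^sup>2 + (pdy g p)\<^sup>2 - 1) * pdx g p)"
  define f2 where "f2 = (\<lambda>p. ((pdx g p)\<^sup>2 + (pdy g p)\<^sup>2 - 1) * pdy g p)"
  have "periodic_L L f1" "periodic_L L f2"
    using periodic_L_pdx[OF g] periodic_L_pdy[OF g] unfolding f1_def f2_def periodic_L_def by auto
  then have "periodic_L L (pdx f1)" "periodic_L L (pdy f2)" "periodic_L L (lap_c (lap_c g))"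
    using periodic_L_pdx periodic_L_pdy periodic_L_lap_c g by auto
  then show ?thesis
    unfolding phi1_def Let_def f1_def[symmetric] f2_def[symmetric] periodic_L_def by auto
qed

lemma continuous_bounded_on_square:
  assumes "continuous_on UNIV (f :: real \<times> real \<Rightarrow> real)"
  obtains K where "\<And>x y. 0 \<le> x \<Longrightarrow> x \<le> B \<Longrightarrow> 0 \<le> y \<Longrightarrow> y \<le> B \<Longrightarrow> \<bar>f (x,y)\<bar> \<le> K"
proof -
  have "compact (f ` ({0..B} \<times> {0..B}))"
    by (rule compact_continuous_image) (auto intro: continuous_on_subset[OF assms] compact_Times)
  then obtain K where K: "\<forall>z\<in>f ` ({0..B} \<times> {0..B}). norm z \<le> K"
    using compact_imp_bounded bounded_iff by metis
  show ?thesis by (rule that[of K]) (use K in auto)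
qed

lemma DERIV_abs_diff_le:
  fixes f f' :: "real \<Rightarrow> real"
  assumes "a < b" "\<And>s. a \<le> s \<Longrightarrow> s \<le> b \<Longrightarrow> DERIV f s :> f' s"
    and "\<And>s. a \<le> s \<Longrightarrow> s \<le> b \<Longrightarrow> \<bar>f' s\<bar> \<le> K"
  shows "\<bar>f b - f a\<bar> \<le> (b - a) * K"
proof -
  obtain z where z: "a < z" "z < b" "f b - f a = (b - a) * f' z"
    using MVT2[OF assms(1), of f f'] assms(2) by blast
  have "\<bar>(b - a) * f' z\<bar> = (b - a) * \<bar>f' z\<bar>" using assms(1) by (simp add: abs_mult)
  also have "\<dots> \<le> (b - a) * K" using assms(3)[of z] z assms(1) by (intro mult_left_mono) auto
  finally show ?thesis using z by simp
qed

lemma difference_quotients_le: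
  fixes f f' f'' :: "real \<Rightarrow> real"
  assumes t: "0 < t" and d1: "\<And>s. DERIV f s :> f' s" and d2: "\<And>s. DERIV f' s :> f'' s"
    and b1: "\<And>s. x - t \<le> s \<Longrightarrow> s \<le> x + t \<Longrightarrow> \<bar>f' s\<bar> \<le> K1"
    and b2: "\<And>s. x - t \<le> s \<Longrightarrow> s \<le> x + t \<Longrightarrow> \<bar>f'' s\<bar> \<le> K2"
  shows "\<bar>(f (x + t) - f (x - t)) / (2 * t)\<bar> \<le> K1"
    and "\<bar>((f (x + t) - f x) / t - (f x - f (x - t)) / t) / t\<bar> \<le> K2"
proof -
  have "\<bar>f (x + t) - f (x - t)\<bar> \<le> ((x + t) - (x - t)) * K1"
    by (rule DERIV_abs_diff_le) (use t d1 b1 in auto)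
  then show "\<bar>(f (x + t) - f (x - t)) / (2 * t)\<bar> \<le> K1" using t by (simp add: field_simps abs_divide)
next
  define g where "g s = f (s + t) - f s" for s
  have "\<exists>z. x - t < z \<and> z < x \<and> g x - g (x - t) = (x - (x - t)) * (f' (z + t) - f' z)"
  proof (rule MVT2)
    show "x - t < x" using t by simp
    fix s assume "x - t \<le> s" "s \<le> x"
    then show "DERIV g s :> f' (s + t) - f' s" unfolding g_def
      using d1[of "s + t"] d1[of s]
      by (auto intro!: derivative_eq_intros simp: DERIV_shift[symmetric])
  qed
  then obtain z where z: "x - t < z" "z < x" "g x - g (x - t) = t * (f' (z + t) - f' z)" by auto
  have "\<bar>f' (z + t) - f' z\<bar> \<le> ((z + t) - z) * K2"
    by (rule DERIV_abs_diff_le[where f'=f'']) (use t z d2 b2 in auto)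
  then have "\<bar>g x - g (x - t)\<bar> \<le> t * (t * K2)" using z t by (simp add: abs_mult)
  moreover have "((f (x + t) - f x) / t - (f x - f (x - t)) / t) / t = (g x - g (x - t)) / (t * t)"
    unfolding g_def using t by (simp add: field_simps)
  ultimately show "\<bar>((f (x + t) - f x) / t - (f x - f (x - t)) / t) / t\<bar> \<le> K2"
    using t by (simp add: abs_divide divide_le_eq mult.commute mult.left_commute)
qed

lemma smooth_fun_difference_quotients_bounded:
  assumes g: "smooth_fun g"
  obtains K where "\<And>x y t. 0 < t \<Longrightarrow> 0 \<le> x - t \<Longrightarrow> x + t \<le> B \<Longrightarrow> 0 \<le> y - t \<Longrightarrow> y + t \<le> B \<Longrightarrow>
     \<bar>(g (x+t,y) - g (x-t,y)) / (2*t)\<bar> \<le> K \<and> \<bar>((g (x+t,y) - g (x,y))/t - (g (x,y) - g (x-t,y))/t)/t\<bar> \<le> K \<and>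
     \<bar>(g (x,y+t) - g (x,y-t)) / (2*t)\<bar> \<le> K \<and> \<bar>((g (x,y+t) - g (x,y))/t - (g (x,y) - g (x,y-t))/t)/t\<bar> \<le> K"
proof -
  have gx: "smooth_fun (pdx g)" and gy: "smooth_fun (pdy g)" using g by (rule smooth_fun_pdx smooth_fun_pdy)+
  obtain K1 where K1: "\<And>x y. 0 \<le> x \<Longrightarrow> x \<le> B \<Longrightarrow> 0 \<le> y \<Longrightarrow> y \<le> B \<Longrightarrow> \<bar>pdx g (x,y)\<bar> \<le> K1"
    using continuous_bounded_on_square smooth_fun_continuous[OF gx] by blast
  obtain K2 where K2: "\<And>x y. 0 \<le> x \<Longrightarrow> x \<le> B \<Longrightarrow> 0 \<le> y \<Longrightarrow> y \<le> B \<Longrightarrow> \<bar>pdx (pdx g) (x,y)\<bar> \<le> K2"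
    using continuous_bounded_on_square smooth_fun_continuous[OF smooth_fun_pdx[OF gx]] by blast
  obtain K3 where K3: "\<And>x y. 0 \<le> x \<Longrightarrow> x \<le> B \<Longrightarrow> 0 \<le> y \<Longrightarrow> y \<le> B \<Longrightarrow> \<bar>pdy g (x,y)\<bar> \<le> K3"
    using continuous_bounded_on_square smooth_fun_continuous[OF gy] by blast
  obtain K4 where K4: "\<And>x y. 0 \<le> x \<Longrightarrow> x \<le> B \<Longrightarrow> 0 \<le> y \<Longrightarrow> y \<le> B \<Longrightarrow> \<bar>pdy (pdy g) (x,y)\<bar> \<le> K4"
    using continuous_bounded_on_square smooth_fun_continuous[OF smooth_fun_pdy[OF gy]] by blast
  show ?thesis
  proof (rule that[of "max (max K1 K2) (max K3 K4)"])
    fix x y t :: real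
    assume t: "0 < t" and box: "0 \<le> x - t" "x + t \<le> B" "0 \<le> y - t" "y + t \<le> B"
    have bound_x: "\<bar>pdx g (s,y)\<bar> \<le> K1" "\<bar>pdx (pdx g) (s,y)\<bar> \<le> K2" if "x - t \<le> s" "s \<le> x + t" for s
      by (rule K1 K2; use that t box in linarith)+
    have bound_y: "\<bar>pdy g (x,s)\<bar> \<le> K3" "\<bar>pdy (pdy g) (x,s)\<bar> \<le> K4" if "y - t \<le> s" "s \<le> y + t" for s
      by (rule K3 K4; use that t box in linarith)+
    have "\<bar>(g (x+t,y) - g (x-t,y)) / (2*t)\<bar> \<le> K1"
      and "\<bar>((g (x+t,y) - g (x,y))/t - (g (x,y) - g (x-t,y))/t)/t\<bar> \<le> K2"
      using difference_quotients_le[where f="\<lambda>s. g (s,y)" and f'="\<lambda>s. pdx g (s,y)"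
          and f''="\<lambda>s. pdx (pdx g) (s,y)", OF t smooth_fun_has_pdx[OF g] smooth_fun_has_pdx[OF gx] bound_x]
      by simp_all
    moreover have "\<bar>(g (x,y+t) - g (x,y-t)) / (2*t)\<bar> \<le> K3"
      and "\<bar>((g (x,y+t) - g (x,y))/t - (g (x,y) - g (x,y-t))/t)/t\<bar> \<le> K4"
      using difference_quotients_le[where f="\<lambda>s. g (x,s)" and f'="\<lambda>s. pdy g (x,s)"
          and f''="\<lambda>s. pdy (pdy g) (x,s)", OF t smooth_fun_has_pdy[OF g] smooth_fun_has_pdy[OF gy] bound_y]
      by simp_all
    ultimately show "\<bar>(g (x+t,y) - g (x-t,y)) / (2*t)\<bar> \<le> max (max K1 K2) (max K3 K4) \<and>
        \<bar>((g (x+t,y) - g (x,y))/t - (g (x,y) - g (x-t,y))/t)/t\<bar> \<le> max (max K1 K2) (max K3 K4) \<and>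
        \<bar>(g (x,y+t) - g (x,y-t)) / (2*t)\<bar> \<le> max (max K1 K2) (max K3 K4) \<and>
        \<bar>((g (x,y+t) - g (x,y))/t - (g (x,y) - g (x,y-t))/t)/t\<bar> \<le> max (max K1 K2) (max K3 K4)"
      by linarith
  qed
qed

definition grid_sample :: "real \<Rightarrow> (real \<times> real \<Rightarrow> real) \<Rightarrow> grid" where
  "grid_sample h g = (\<lambda>i j. g (of_int i * h, of_int j * h))"

lemma grid_periodic_grid_sample:
  assumes g: "periodic_L L g" and M: "M \<ge> 1"
  shows "grid_periodic M (grid_sample (L / real M) g)"
proof -
  have "of_int (k + int M) * (L / real M) = of_int k * (L / real M) + L" for k
    using M by (simp add: field_simps)
  then show ?thesis using g unfolding grid_periodic_def grid_sample_def periodic_L_def by simp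
qed

lemma grid_sample_difference_quotients_bounded:
  assumes g: "smooth_fun g" and L: "L > 0"
  obtains K where "\<And>M i j. M \<ge> 1 \<Longrightarrow> i \<in> {1..int M} \<Longrightarrow> j \<in> {1..int M} \<Longrightarrow>
     \<bar>Dxc (L / real M) (grid_sample (L / real M) g) i j\<bar> \<le> K \<and>
     \<bar>Dyc (L / real M) (grid_sample (L / real M) g) i j\<bar> \<le> K \<and>
     \<bar>dxx (L / real M) (grid_sample (L / real M) g) i j\<bar> \<le> K \<and>
     \<bar>dyy (L / real M) (grid_sample (L / real M) g) i j\<bar> \<le> K"
proof -
  obtain K where K: "\<And>x y t. 0 < t \<Longrightarrow> 0 \<le> x - t \<Longrightarrow> x + t \<le> 2 * L \<Longrightarrow> 0 \<le> y - t \<Longrightarrow> y + t \<le> 2 * L \<Longrightarrow>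
     \<bar>(g (x+t,y) - g (x-t,y)) / (2*t)\<bar> \<le> K \<and> \<bar>((g (x+t,y) - g (x,y))/t - (g (x,y) - g (x-t,y))/t)/t\<bar> \<le> K \<and>
     \<bar>(g (x,y+t) - g (x,y-t)) / (2*t)\<bar> \<le> K \<and> \<bar>((g (x,y+t) - g (x,y))/t - (g (x,y) - g (x,y-t))/t)/t\<bar> \<le> K"
    using smooth_fun_difference_quotients_bounded[OF g] by blast
  show ?thesis
  proof (rule that[of K])
    fix M :: nat and i j :: int
    assume M: "M \<ge> 1" and ij: "i \<in> {1..int M}" "j \<in> {1..int M}"
    define h where "h = L / real M"
    have h: "0 < h" "h \<le> L" "real M * h = L" using L M by (auto simp: h_def field_simps)
    have "1 \<le> real_of_int i" "real_of_int i \<le> real M" "1 \<le> real_of_int j" "real_of_int j \<le> real M"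
      using ij by auto
    then have "h \<le> of_int i * h" "of_int i * h \<le> real M * h" "h \<le> of_int j * h" "of_int j * h \<le> real M * h"
      using h(1) by (simp_all add: mult_right_mono)
    then have "0 \<le> of_int i * h - h" "of_int i * h + h \<le> 2 * L" "0 \<le> of_int j * h - h" "of_int j * h + h \<le> 2 * L"
      using h by linarith+
    from K[OF h(1) this] show "\<bar>Dxc h (grid_sample h g) i j\<bar> \<le> K \<and> \<bar>Dyc h (grid_sample h g) i j\<bar> \<le> K \<and>
        \<bar>dxx h (grid_sample h g) i j\<bar> \<le> K \<and> \<bar>dyy h (grid_sample h g) i j\<bar> \<le> K"
      by (simp add: Dxc_def Dyc_def dxx_def dyy_def grid_sample_def algebra_simps)
  qed
qed

lemma grid_periodic_shift:
  assumes v: "grid_periodic M v"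
  shows "v (i + k * int M) (j + l * int M) = v i j"
proof -
  have nat_shift: "v (a + int n * int M) b = v a b \<and> v a (b + int n * int M) = v a b" for a b n
  proof (induction n)
    case (Suc n)
    have "a + int (Suc n) * int M = (a + int n * int M) + int M"
      "b + int (Suc n) * int M = (b + int n * int M) + int M" by (simp_all add: algebra_simps)
    then show ?case using Suc v unfolding grid_periodic_def by metis
  qed simp
  have int_shift: "v (a + k * int M) b = v a b \<and> v a (b + k * int M) = v a b" for a b k
  proof (cases "k \<ge> 0")
    case True
    then show ?thesis using nat_shift[where a=a and b=b and n="nat k"] by simp
  next
    case False
    then show ?thesis using nat_shift[where a="a + k * int M" and b=b and n="nat (- k)"]
      nat_shift[where a=a and b="b + k * int M" and n="nat (- k)"]
      by (simp add: algebra_simps)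
  qed
  show ?thesis using int_shift by metis
qed

lemma grid_periodic_eqI:
  assumes a: "grid_periodic M a" and b: "grid_periodic M b" and M: "M \<ge> 1"
    and eq: "\<And>i j. i \<in> {0..int M} \<Longrightarrow> j \<in> {0..int M} \<Longrightarrow> a i j = b i j"
  shows "a = b"
proof (intro ext)
  fix i j
  have "i mod int M \<in> {0..int M}" "j mod int M \<in> {0..int M}"
    using M pos_mod_bound[of "int M"] pos_mod_sign[of "int M"] by (simp_all add: order_less_imp_le)
  then have "a (i mod int M) (j mod int M) = b (i mod int M) (j mod int M)" by (rule eq)
  then show "a i j = b i j"
    using grid_periodic_shift[OF a, of "i mod int M" "i div int M" "j mod int M" "j div int M"]
      grid_periodic_shift[OF b, of "i mod int M" "i div int M" "j mod int M" "j div int M"]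
    by (simp add: mod_div_mult_eq)
qed

lemma initial_level_eq_samples:
  assumes M: "M \<ge> 1" and u: "grid_periodic M u" and \<phi>: "periodic_L L \<phi>0"
    and u_init: "\<forall>i\<in>{0..int M}. \<forall>j\<in>{0..int M}. u i j = \<phi>0 (of_int i * (L / real M), of_int j * (L / real M))
        - t / 2 * phi1 \<delta> \<phi>0 (of_int i * (L / real M), of_int j * (L / real M))"
  shows "u = (\<lambda>i j. grid_sample (L / real M) \<phi>0 i j - t / 2 * grid_sample (L / real M) (phi1 \<delta> \<phi>0) i j)"
proof (rule grid_periodic_eqI[OF u _ M])
  show "grid_periodic M (\<lambda>i j. grid_sample (L / real M) \<phi>0 i j - t / 2 * grid_sample (L / real M) (phi1 \<delta> \<phi>0) i j)"
    using grid_periodic_grid_sample[OF \<phi> M] grid_periodic_grid_sample[OF periodic_L_phi1[OF \<phi>] M]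
    unfolding grid_periodic_def by simp
qed (use u_init in \<open>simp add: grid_sample_def\<close>)

lemma abs_sub_scaled_le:
  fixes P Q t T K0 K1 :: real
  assumes "\<bar>P\<bar> \<le> K0" "\<bar>Q\<bar> \<le> K1" "0 \<le> t" "t \<le> T"
  shows "\<bar>P - t / 2 * Q\<bar> \<le> \<bar>K0\<bar> + \<bar>T\<bar> * \<bar>K1\<bar>"
proof -
  have "\<bar>t / 2 * Q\<bar> = t / 2 * \<bar>Q\<bar>" using assms by (simp add: abs_mult)
  also have "\<dots> \<le> \<bar>T\<bar> * \<bar>K1\<bar>" using assms by (intro mult_mono) auto
  finally show ?thesis using assms(1) by linarith
qed

lemma initial_level_difference_quotients_bounded:
  assumes L: "L > 0" and \<phi>: "smooth_fun \<phi>0" "periodic_L L \<phi>0"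
  obtains K where "\<And>M t u i j. M \<ge> 1 \<Longrightarrow> 0 \<le> t \<Longrightarrow> t \<le> T \<Longrightarrow> grid_periodic M u \<Longrightarrow>
     (\<forall>i\<in>{0..int M}. \<forall>j\<in>{0..int M}. u i j = \<phi>0 (of_int i * (L / real M), of_int j * (L / real M))
        - t / 2 * phi1 \<delta> \<phi>0 (of_int i * (L / real M), of_int j * (L / real M))) \<Longrightarrow>
     i \<in> {1..int M} \<Longrightarrow> j \<in> {1..int M} \<Longrightarrow>
     \<bar>Dxc (L / real M) u i j\<bar> \<le> K \<and> \<bar>Dyc (L / real M) u i j\<bar> \<le> K \<and> \<bar>lap_h (L / real M) u i j\<bar> \<le> K"
proof -
  obtain K0 where K0: "\<And>M i j. M \<ge> 1 \<Longrightarrow> i \<in> {1..int M} \<Longrightarrow> j \<in> {1..int M} \<Longrightarrow>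
     \<bar>Dxc (L / real M) (grid_sample (L / real M) \<phi>0) i j\<bar> \<le> K0 \<and>
     \<bar>Dyc (L / real M) (grid_sample (L / real M) \<phi>0) i j\<bar> \<le> K0 \<and>
     \<bar>dxx (L / real M) (grid_sample (L / real M) \<phi>0) i j\<bar> \<le> K0 \<and>
     \<bar>dyy (L / real M) (grid_sample (L / real M) \<phi>0) i j\<bar> \<le> K0"
    using grid_sample_difference_quotients_bounded[OF \<phi>(1) L] by blast
  obtain K1 where K1: "\<And>M i j. M \<ge> 1 \<Longrightarrow> i \<in> {1..int M} \<Longrightarrow> j \<in> {1..int M} \<Longrightarrow>
     \<bar>Dxc (L / real M) (grid_sample (L / real M) (phi1 \<delta> \<phi>0)) i j\<bar> \<le> K1 \<and>
     \<bar>Dyc (L / real M) (grid_sample (L / real M) (phi1 \<delta> \<phi>0)) i j\<bar> \<le> K1 \<and>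
     \<bar>dxx (L / real M) (grid_sample (L / real M) (phi1 \<delta> \<phi>0)) i j\<bar> \<le> K1 \<and>
     \<bar>dyy (L / real M) (grid_sample (L / real M) (phi1 \<delta> \<phi>0)) i j\<bar> \<le> K1"
    using grid_sample_difference_quotients_bounded[OF smooth_fun_phi1[OF \<phi>(1)] L] by blast
  define K where "K = \<bar>K0\<bar> + \<bar>T\<bar> * \<bar>K1\<bar>"
  show ?thesis
  proof (rule that[of "2 * K"])
    fix M :: nat and t :: real and u :: grid and i j :: int
    assume M: "M \<ge> 1" and t: "0 \<le> t" "t \<le> T" and u: "grid_periodic M u"
      and u_init: "\<forall>i\<in>{0..int M}. \<forall>j\<in>{0..int M}. u i j = \<phi>0 (of_int i * (L / real M), of_int j * (L / real M))
        - t / 2 * phi1 \<delta> \<phi>0 (of_int i * (L / real M), of_int j * (L / real M))"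
      and ij: "i \<in> {1..int M}" "j \<in> {1..int M}"
    define h where "h = L / real M"
    define s0 where "s0 = grid_sample h \<phi>0"
    define s1 where "s1 = grid_sample h (phi1 \<delta> \<phi>0)"
    have "h \<noteq> 0" using L M by (simp add: h_def)
    then have lin: "Dxc h u i j = Dxc h s0 i j - t / 2 * Dxc h s1 i j"
      "Dyc h u i j = Dyc h s0 i j - t / 2 * Dyc h s1 i j"
      "dxx h u i j = dxx h s0 i j - t / 2 * dxx h s1 i j"
      "dyy h u i j = dyy h s0 i j - t / 2 * dyy h s1 i j"
      unfolding initial_level_eq_samples[OF M u \<phi>(2) u_init, folded h_def, folded s0_def s1_def]
        Dxc_def Dyc_def dxx_def dyy_def by (simp_all add: field_simps)
    note b0 = K0[OF M ij, folded h_def, folded s0_def] and b1 = K1[OF M ij, folded h_def, folded s1_def]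
    have "\<bar>Dxc h u i j\<bar> \<le> K" "\<bar>Dyc h u i j\<bar> \<le> K" "\<bar>dxx h u i j\<bar> \<le> K" "\<bar>dyy h u i j\<bar> \<le> K"
      unfolding lin K_def by (rule abs_sub_scaled_le; use b0 b1 t in blast)+
    moreover have "0 \<le> K" unfolding K_def by simp
    ultimately show "\<bar>Dxc h u i j\<bar> \<le> 2 * K \<and> \<bar>Dyc h u i j\<bar> \<le> 2 * K \<and> \<bar>lap_h h u i j\<bar> \<le> 2 * K"
      using abs_triangle_ineq[of "dxx h u i j" "dyy h u i j"] unfolding lap_h_def by auto
  qed
qed

section \<open>Summation by parts on the periodic grid\<close>

lemma grid_sum_add: "grid_sum M h (\<lambda>i j. a i j + b i j) = grid_sum M h a + grid_sum M h b"
  unfolding grid_sum_def by (simp add: sum.distrib distrib_left)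

lemma grid_sum_diff: "grid_sum M h (\<lambda>i j. a i j - b i j) = grid_sum M h a - grid_sum M h b"
  unfolding grid_sum_def by (simp add: sum_subtractf right_diff_distrib)

lemma grid_sum_cmult: "grid_sum M h (\<lambda>i j. c * a i j) = c * grid_sum M h a"
  unfolding grid_sum_def by (simp add: sum_distrib_left mult.left_commute)

lemma grid_sum_divide: "grid_sum M h (\<lambda>i j. a i j / c) = grid_sum M h a / c"
  unfolding grid_sum_def by (simp add: sum_divide_distrib[symmetric])

lemma grid_sum_minus: "grid_sum M h (\<lambda>i j. - a i j) = - grid_sum M h a"
  unfolding grid_sum_def by (simp add: sum_negf)

lemma grid_sum_const: "grid_sum M h (\<lambda>i j. c) = (h * real M)\<^sup>2 * c"
  unfolding grid_sum_def by (simp add: power2_eq_square)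

lemma grid_sum_mono:
  "(\<And>i j. i \<in> {1..int M} \<Longrightarrow> j \<in> {1..int M} \<Longrightarrow> a i j \<le> b i j) \<Longrightarrow> grid_sum M h a \<le> grid_sum M h b"
  unfolding grid_sum_def by (intro mult_left_mono sum_mono) auto

lemma grid_sum_cong:
  "(\<And>i j. i \<in> {1..int M} \<Longrightarrow> j \<in> {1..int M} \<Longrightarrow> a i j = b i j) \<Longrightarrow> grid_sum M h a = grid_sum M h b"
  unfolding grid_sum_def by (intro arg_cong[where f="\<lambda>x. h\<^sup>2 * x"] sum.cong) auto

lemma grid_sum_nonneg: "(\<And>i j. 0 \<le> a i j) \<Longrightarrow> 0 \<le> grid_sum M h a"
  unfolding grid_sum_def by (simp add: sum_nonneg)

lemma sum_int_telescope: "(\<Sum>i\<in>{1..int n}. f (i + 1) - f i :: real) = f (int n + 1) - f 1"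
proof (induction n)
  case (Suc n)
  have "{1..int (Suc n)} = insert (int n + 1) {1..int n}" by auto
  then show ?case using Suc by (simp add: add.commute)
qed simp

lemma grid_periodic_simps:
  assumes "grid_periodic M v"
  shows "v (i + int M) j = v i j" "v (i + int M + 1) j = v (i + 1) j" "v (i + int M - 1) j = v (i - 1) j"
    "v i (j + int M) = v i j" "v i (j + int M + 1) = v i (j + 1)" "v i (j + int M - 1) = v i (j - 1)"
proof -
  have px: "v (a + int M) b = v a b" and py: "v a (b + int M) = v a b" for a b
    using assms unfolding grid_periodic_def by auto
  show "v (i + int M) j = v i j" "v (i + int M + 1) j = v (i + 1) j" "v (i + int M - 1) j = v (i - 1) j"
    "v i (j + int M) = v i j" "v i (j + int M + 1) = v i (j + 1)" "v i (j + int M - 1) = v i (j - 1)"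
    using px[of i j] px[of "i + 1" j] px[of "i - 1" j] py[of i j] py[of i "j + 1"] py[of i "j - 1"]
    by (simp_all add: algebra_simps)
qed

lemma grid_sum_telescope_x:
  assumes "grid_periodic M G"
  shows "grid_sum M h (\<lambda>i j. G (i + 1) j - G i j) = 0"
proof -
  have "(\<Sum>i\<in>{1..int M}. \<Sum>j\<in>{1..int M}. G (i + 1) j - G i j)
      = (\<Sum>j\<in>{1..int M}. \<Sum>i\<in>{1..int M}. G (i + 1) j - G i j)"
    by (rule sum.swap)
  also have "\<dots> = (\<Sum>j\<in>{1..int M}. G (int M + 1) j - G 1 j)"
    by (intro sum.cong refl) (rule sum_int_telescope)
  also have "\<dots> = 0" using grid_periodic_simps(1)[OF assms, of 1] by (simp add: add.commute)
  finally show ?thesis unfolding grid_sum_def by simp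
qed

lemma grid_sum_telescope_y:
  assumes "grid_periodic M G"
  shows "grid_sum M h (\<lambda>i j. G i (j + 1) - G i j) = 0"
proof -
  have "(\<Sum>i\<in>{1..int M}. \<Sum>j\<in>{1..int M}. G i (j + 1) - G i j)
      = (\<Sum>i\<in>{1..int M}. G i (int M + 1) - G i 1)"
    by (intro sum.cong refl) (rule sum_int_telescope)
  also have "\<dots> = 0" using grid_periodic_simps(4)[OF assms, of _ 1] by (simp add: add.commute)
  finally show ?thesis unfolding grid_sum_def by simp
qed

lemma grid_sum_telescope:
  assumes Gx: "grid_periodic M Gx" and Gy: "grid_periodic M Gy"
  shows "grid_sum M h (\<lambda>i j. Y i j + (Gx (i + 1) j - Gx i j) + (Gy i (j + 1) - Gy i j)) = grid_sum M h Y"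
  using grid_sum_telescope_x[OF Gx, of h] grid_sum_telescope_y[OF Gy, of h] by (simp add: grid_sum_add)

lemma grid_sum_eq_by_telescope:
  assumes "grid_periodic M Gx" "grid_periodic M Gy"
    and "\<And>i j. X i j = Y i j + (Gx (i + 1) j - Gx i j) + (Gy i (j + 1) - Gy i j)"
  shows "grid_sum M h X = grid_sum M h Y"
proof -
  have "grid_sum M h X = grid_sum M h (\<lambda>i j. Y i j + (Gx (i + 1) j - Gx i j) + (Gy i (j + 1) - Gy i j))"
    by (rule grid_sum_cong) (rule assms(3))
  then show ?thesis using grid_sum_telescope[OF assms(1,2)] by simp
qed

lemma grid_sum_le_by_telescope:
  assumes "grid_periodic M Gx" "grid_periodic M Gy"
    and "\<And>i j. X i j \<le> Y i j + (Gx (i + 1) j - Gx i j) + (Gy i (j + 1) - Gy i j)"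
  shows "grid_sum M h X \<le> grid_sum M h Y"
proof -
  have "grid_sum M h X \<le> grid_sum M h (\<lambda>i j. Y i j + (Gx (i + 1) j - Gx i j) + (Gy i (j + 1) - Gy i j))"
    by (rule grid_sum_mono) (rule assms(3))
  then show ?thesis using grid_sum_telescope[OF assms(1,2)] by simp
qed

lemma grid_periodic_lap_h:
  assumes "grid_periodic M v"
  shows "grid_periodic M (lap_h h v)"
  unfolding grid_periodic_def lap_h_def dxx_def dyy_def using assms by (simp add: grid_periodic_simps)

lemma grid_sum_lap_h_symmetric:
  assumes a: "grid_periodic M a" and b: "grid_periodic M b" and h: "h \<noteq> 0"
  shows "grid_sum M h (\<lambda>i j. lap_h h a i j * b i j) = grid_sum M h (\<lambda>i j. a i j * lap_h h b i j)"
proof (rule grid_sum_eq_by_telescope)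
  let ?Gx = "\<lambda>i j. (a i j * b (i - 1) j - a (i - 1) j * b i j) / h\<^sup>2"
  let ?Gy = "\<lambda>i j. (a i j * b i (j - 1) - a i (j - 1) * b i j) / h\<^sup>2"
  show "grid_periodic M ?Gx" "grid_periodic M ?Gy"
    unfolding grid_periodic_def using a b by (simp_all add: grid_periodic_simps)
  fix i j
  show "lap_h h a i j * b i j = a i j * lap_h h b i j + (?Gx (i + 1) j - ?Gx i j) + (?Gy i (j + 1) - ?Gy i j)"
    unfolding lap_h_def dxx_def dyy_def using h by (simp add: field_simps power2_eq_square)
qed

lemma grid_sum_div_by_parts:
  assumes g1: "grid_periodic M g1" and g2: "grid_periodic M g2" and w: "grid_periodic M w" and h: "h \<noteq> 0"
  shows "grid_sum M h (\<lambda>i j. (Dxc h g1 i j + Dyc h g2 i j) * w i j)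
       = - grid_sum M h (\<lambda>i j. g1 i j * Dxc h w i j + g2 i j * Dyc h w i j)"
proof -
  have "grid_sum M h (\<lambda>i j. (Dxc h g1 i j + Dyc h g2 i j) * w i j + (g1 i j * Dxc h w i j + g2 i j * Dyc h w i j))
     = grid_sum M h (\<lambda>i j. 0)"
  proof (rule grid_sum_eq_by_telescope)
    let ?Gx = "\<lambda>i j. (g1 i j * w (i - 1) j + g1 (i - 1) j * w i j) / (2 * h)"
    let ?Gy = "\<lambda>i j. (g2 i j * w i (j - 1) + g2 i (j - 1) * w i j) / (2 * h)"
    show "grid_periodic M ?Gx" "grid_periodic M ?Gy"
      unfolding grid_periodic_def using g1 g2 w by (simp_all add: grid_periodic_simps)
    fix i j
    show "(Dxc h g1 i j + Dyc h g2 i j) * w i j + (g1 i j * Dxc h w i j + g2 i j * Dyc h w i j)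
        = 0 + (?Gx (i + 1) j - ?Gx i j) + (?Gy i (j + 1) - ?Gy i j)"
      unfolding Dxc_def Dyc_def using h by (simp add: field_simps)
  qed
  then show ?thesis by (simp add: grid_sum_add grid_sum_def)
qed

lemma square_of_mean_le: "((x + y) / 2)\<^sup>2 \<le> ((x::real)\<^sup>2 + y\<^sup>2) / 2"
proof -
  have "((x + y) / 2)\<^sup>2 = (x\<^sup>2 + y\<^sup>2) / 2 - ((x - y) / 2)\<^sup>2" by (simp add: power2_eq_square field_simps)
  then show ?thesis using zero_le_power2[of "(x - y) / 2"] by linarith
qed

lemma grid_sum_grad_sq_le:
  assumes w: "grid_periodic M w" and h: "h \<noteq> 0"
  shows "grid_sum M h (\<lambda>i j. (Dxc h w i j)\<^sup>2 + (Dyc h w i j)\<^sup>2) \<le> - grid_sum M h (\<lambda>i j. w i j * lap_h h w i j)"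
proof -
  have "grid_sum M h (\<lambda>i j. (Dxc h w i j)\<^sup>2 + (Dyc h w i j)\<^sup>2) \<le> grid_sum M h (\<lambda>i j. - (w i j * lap_h h w i j))"
  proof (rule grid_sum_le_by_telescope)
    let ?ax = "\<lambda>i j. (w (i + 1) j - w i j) / h"
    let ?ay = "\<lambda>i j. (w i (j + 1) - w i j) / h"
    let ?Gx = "\<lambda>i j. ((w i j)\<^sup>2 - w i j * w (i - 1) j) / h\<^sup>2 - (?ax (i - 1) j)\<^sup>2 / 2"
    let ?Gy = "\<lambda>i j. ((w i j)\<^sup>2 - w i j * w i (j - 1)) / h\<^sup>2 - (?ay i (j - 1))\<^sup>2 / 2"
    show "grid_periodic M ?Gx" "grid_periodic M ?Gy"
      unfolding grid_periodic_def using w by (simp_all add: grid_periodic_simps)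
    fix i j
    have mean: "Dxc h w i j = (?ax i j + ?ax (i - 1) j) / 2" "Dyc h w i j = (?ay i j + ?ay i (j - 1)) / 2"
      unfolding Dxc_def Dyc_def using h by (simp_all add: field_simps)
    have "(Dxc h w i j)\<^sup>2 \<le> ((?ax i j)\<^sup>2 + (?ax (i - 1) j)\<^sup>2) / 2"
      "(Dyc h w i j)\<^sup>2 \<le> ((?ay i j)\<^sup>2 + (?ay i (j - 1))\<^sup>2) / 2"
      unfolding mean by (rule square_of_mean_le)+
    moreover have "((?ax i j)\<^sup>2 + (?ax (i - 1) j)\<^sup>2) / 2 + ((?ay i j)\<^sup>2 + (?ay i (j - 1))\<^sup>2) / 2
        = - (w i j * lap_h h w i j) + (?Gx (i + 1) j - ?Gx i j) + (?Gy i (j + 1) - ?Gy i j)"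
      unfolding lap_h_def dxx_def dyy_def using h by (simp add: field_simps power2_eq_square)
    ultimately show "(Dxc h w i j)\<^sup>2 + (Dyc h w i j)\<^sup>2
        \<le> - (w i j * lap_h h w i j) + (?Gx (i + 1) j - ?Gx i j) + (?Gy i (j + 1) - ?Gy i j)"
      by linarith
  qed
  then show ?thesis by (simp add: grid_sum_minus)
qed

section \<open>Energy inequality for one implicit step\<close>

definition sq_norm :: "nat \<Rightarrow> real \<Rightarrow> grid \<Rightarrow> real" where
  "sq_norm M h v = grid_sum M h (\<lambda>i j. (v i j)\<^sup>2)"

definition potential_energy :: "nat \<Rightarrow> real \<Rightarrow> grid \<Rightarrow> real" where
  "potential_energy M h v = grid_sum M h (\<lambda>i j. ((Dxc h v i j)\<^sup>2 + (Dyc h v i j)\<^sup>2 - 1)\<^sup>2 / 4)"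

text \<open>Twice the discrete energy \<open>\<delta>/2 \<parallel>\<Delta>\<^sub>h v\<parallel>\<^sup>2 + \<langle>F(\<nabla>\<^sub>h v), 1\<rangle>\<close> of the paper.\<close>
definition energy :: "nat \<Rightarrow> real \<Rightarrow> real \<Rightarrow> grid \<Rightarrow> real" where
  "energy M h \<delta> v = \<delta> * sq_norm M h (lap_h h v) + 2 * potential_energy M h v"

lemma sq_norm_nonneg: "0 \<le> sq_norm M h v"
  unfolding sq_norm_def by (rule grid_sum_nonneg) simp

lemma potential_energy_nonneg: "0 \<le> potential_energy M h v"
  unfolding potential_energy_def by (rule grid_sum_nonneg) simp

lemma double_well_secant_ineq:
  fixes a1 a2 b1 b2 :: real
  shows "(a1\<^sup>2 + a2\<^sup>2 - 1)\<^sup>2 / 4 - (b1\<^sup>2 + b2\<^sup>2 - 1)\<^sup>2 / 4 - ((a1 - b1)\<^sup>2 + (a2 - b2)\<^sup>2) / 2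
    \<le> (a1\<^sup>2 + a2\<^sup>2 - 1) * a1 * (a1 - b1) + (a1\<^sup>2 + a2\<^sup>2 - 1) * a2 * (a2 - b2)"
proof -
  have "(a1\<^sup>2 + a2\<^sup>2 - 1) * a1 * (a1 - b1) + (a1\<^sup>2 + a2\<^sup>2 - 1) * a2 * (a2 - b2)
      - ((a1\<^sup>2 + a2\<^sup>2 - 1)\<^sup>2 / 4 - (b1\<^sup>2 + b2\<^sup>2 - 1)\<^sup>2 / 4 - ((a1 - b1)\<^sup>2 + (a2 - b2)\<^sup>2) / 2)
    = ((b1\<^sup>2 + b2\<^sup>2) - (a1\<^sup>2 + a2\<^sup>2))\<^sup>2 / 4 + (a1\<^sup>2 + a2\<^sup>2) * ((a1 - b1)\<^sup>2 + (a2 - b2)\<^sup>2) / 2"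
    by (simp add: power2_eq_square field_simps)
  moreover have "0 \<le> ((b1\<^sup>2 + b2\<^sup>2) - (a1\<^sup>2 + a2\<^sup>2))\<^sup>2 / 4 + (a1\<^sup>2 + a2\<^sup>2) * ((a1 - b1)\<^sup>2 + (a2 - b2)\<^sup>2) / 2"
    by simp
  ultimately show ?thesis by linarith
qed

lemma neg_mult_le_weighted_squares:
  fixes a b d :: real
  assumes "d > 0"
  shows "- (a * b) \<le> a\<^sup>2 / (4 * d) + d * b\<^sup>2"
proof -
  have "a\<^sup>2 / (4 * d) + d * b\<^sup>2 + a * b = (a + 2 * d * b)\<^sup>2 / (4 * d)"
    using assms by (simp add: field_simps power2_eq_square)
  moreover have "(a + 2 * d * b)\<^sup>2 / (4 * d) \<ge> 0" using assms by simp
  ultimately show ?thesis by linarith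
qed

lemma Dxc_diff: "Dxc h (\<lambda>i j. a i j - b i j) i j = Dxc h a i j - Dxc h b i j"
  unfolding Dxc_def by (simp add: diff_divide_distrib)

lemma Dyc_diff: "Dyc h (\<lambda>i j. a i j - b i j) i j = Dyc h a i j - Dyc h b i j"
  unfolding Dyc_def by (simp add: diff_divide_distrib)

lemma lap_h_diff: "lap_h h (\<lambda>i j. a i j - b i j) i j = lap_h h a i j - lap_h h b i j"
  unfolding lap_h_def dxx_def dyy_def by (cases "h = 0") (simp_all add: field_simps)

lemma grid_sum_bilaplacian_mult_increment:
  assumes U: "grid_periodic M U" and U': "grid_periodic M U'" and h: "h \<noteq> 0"
    and w_eq: "w = (\<lambda>i j. U i j - U' i j)"
  shows "2 * grid_sum M h (\<lambda>i j. lap_h h (lap_h h U) i j * w i j)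
    = sq_norm M h (lap_h h U) - sq_norm M h (lap_h h U') + sq_norm M h (lap_h h w)"
proof -
  have w: "grid_periodic M w" using U U' unfolding w_eq grid_periodic_def by simp
  have "2 * grid_sum M h (\<lambda>i j. lap_h h (lap_h h U) i j * w i j)
      = grid_sum M h (\<lambda>i j. 2 * (lap_h h U i j * lap_h h w i j))"
    by (simp add: grid_sum_lap_h_symmetric[OF grid_periodic_lap_h[OF U] w h] grid_sum_cmult)
  also have "\<dots> = sq_norm M h (lap_h h U) - sq_norm M h (lap_h h U') + sq_norm M h (lap_h h w)"
    unfolding sq_norm_def grid_sum_add[symmetric] grid_sum_diff[symmetric] w_eq lap_h_diff
    by (rule grid_sum_cong) (simp add: power2_eq_square algebra_simps)
  finally show ?thesis .
qed

lemma grid_sum_divf_mult_increment_le: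
  assumes U: "grid_periodic M U" and U': "grid_periodic M U'" and h: "h \<noteq> 0"
    and w_eq: "w = (\<lambda>i j. U i j - U' i j)"
  shows "2 * grid_sum M h (\<lambda>i j. divf_h h U i j * w i j)
    \<le> - 2 * potential_energy M h U + 2 * potential_energy M h U'
      + grid_sum M h (\<lambda>i j. (Dxc h w i j)\<^sup>2 + (Dyc h w i j)\<^sup>2)"
proof -
  define g1 where "g1 = (\<lambda>i j. ((Dxc h U i j)\<^sup>2 + (Dyc h U i j)\<^sup>2 - 1) * Dxc h U i j)"
  define g2 where "g2 = (\<lambda>i j. ((Dxc h U i j)\<^sup>2 + (Dyc h U i j)\<^sup>2 - 1) * Dyc h U i j)"
  have w: "grid_periodic M w" using U U' unfolding w_eq grid_periodic_def by simp
  have g: "grid_periodic M g1" "grid_periodic M g2"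
    unfolding g1_def g2_def grid_periodic_def Dxc_def Dyc_def using U by (simp_all add: grid_periodic_simps)
  have divf: "divf_h h U = (\<lambda>i j. Dxc h g1 i j + Dyc h g2 i j)"
    unfolding divf_h_def Let_def g1_def g2_def ..
  have "grid_sum M h (\<lambda>i j. ((Dxc h U i j)\<^sup>2 + (Dyc h U i j)\<^sup>2 - 1)\<^sup>2 / 4
        - ((Dxc h U' i j)\<^sup>2 + (Dyc h U' i j)\<^sup>2 - 1)\<^sup>2 / 4 - ((Dxc h w i j)\<^sup>2 + (Dyc h w i j)\<^sup>2) / 2)
      \<le> grid_sum M h (\<lambda>i j. g1 i j * Dxc h w i j + g2 i j * Dyc h w i j)"
    unfolding g1_def g2_def w_eq Dxc_diff Dyc_diff by (rule grid_sum_mono) (rule double_well_secant_ineq)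
  then show ?thesis
    unfolding divf grid_sum_div_by_parts[OF g w h] potential_energy_def grid_sum_diff grid_sum_divide
    by linarith
qed

lemma grid_sum_grad_sq_le_lap_h:
  assumes w: "grid_periodic M w" and h: "h \<noteq> 0" and \<delta>: "\<delta> > 0"
  shows "grid_sum M h (\<lambda>i j. (Dxc h w i j)\<^sup>2 + (Dyc h w i j)\<^sup>2)
    \<le> sq_norm M h w / (4 * \<delta>) + \<delta> * sq_norm M h (lap_h h w)"
proof -
  have "grid_sum M h (\<lambda>i j. - (w i j * lap_h h w i j))
      \<le> grid_sum M h (\<lambda>i j. (w i j)\<^sup>2 / (4 * \<delta>) + \<delta> * (lap_h h w i j)\<^sup>2)"
    by (rule grid_sum_mono) (rule neg_mult_le_weighted_squares[OF \<delta>])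
  then show ?thesis
    using grid_sum_grad_sq_le[OF w h]
    unfolding sq_norm_def grid_sum_add grid_sum_minus grid_sum_cmult grid_sum_divide by simp
qed

lemma energy_step_ineq:
  assumes U: "grid_periodic M U" and U': "grid_periodic M U'" and h: "h \<noteq> 0" and \<delta>: "\<delta> > 0"
    and eq: "\<And>i j. i \<in> {1..int M} \<Longrightarrow> j \<in> {1..int M} \<Longrightarrow>
              D i j + \<delta> * lap_h h (lap_h h U) i j - divf_h h U i j = 0"
  shows "grid_sum M h (\<lambda>i j. 2 * D i j * (U i j - U' i j)) + energy M h \<delta> U
         \<le> energy M h \<delta> U' + sq_norm M h (\<lambda>i j. U i j - U' i j) / (4 * \<delta>)"
proof -
  define w where "w = (\<lambda>i j. U i j - U' i j)"
  have w: "grid_periodic M w" using U U' unfolding w_def grid_periodic_def by simp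
  let ?L = "\<lambda>V. sq_norm M h (lap_h h V)"
  have "grid_sum M h (\<lambda>i j. 2 * D i j * (U i j - U' i j)) = grid_sum M h (\<lambda>i j.
      (- 2 * \<delta>) * (lap_h h (lap_h h U) i j * w i j) + 2 * (divf_h h U i j * w i j))"
  proof (rule grid_sum_cong)
    fix i j assume "i \<in> {1..int M}" "j \<in> {1..int M}"
    then have D: "D i j = divf_h h U i j - \<delta> * lap_h h (lap_h h U) i j" using eq by fastforce
    show "2 * D i j * (U i j - U' i j)
        = (- 2 * \<delta>) * (lap_h h (lap_h h U) i j * w i j) + 2 * (divf_h h U i j * w i j)"
      unfolding D w_def by (simp add: algebra_simps)
  qed
  also have "\<dots> = - \<delta> * (2 * grid_sum M h (\<lambda>i j. lap_h h (lap_h h U) i j * w i j))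
      + 2 * grid_sum M h (\<lambda>i j. divf_h h U i j * w i j)"
    unfolding grid_sum_add grid_sum_cmult by (simp add: algebra_simps)
  also have "\<dots> = - \<delta> * (?L U - ?L U' + ?L w) + 2 * grid_sum M h (\<lambda>i j. divf_h h U i j * w i j)"
    by (simp only: grid_sum_bilaplacian_mult_increment[OF U U' h w_def])
  also have "\<dots> = - \<delta> * ?L U + \<delta> * ?L U' - \<delta> * ?L w + 2 * grid_sum M h (\<lambda>i j. divf_h h U i j * w i j)"
    by (simp only: algebra_simps)
  finally show ?thesis
    using grid_sum_divf_mult_increment_le[OF U U' h w_def] grid_sum_grad_sq_le_lap_h[OF w h \<delta>]
    unfolding energy_def w_def[symmetric] by linarith
qed

section \<open>Energy decay of the variable-step BDF2 scheme\<close>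

definition bdf2_tail :: "real \<Rightarrow> real" where
  "bdf2_tail s = s powr (3/2) / (1 + s)"

lemma bdf2_tail_nonneg: "0 \<le> s \<Longrightarrow> 0 \<le> bdf2_tail s"
  unfolding bdf2_tail_def by simp

lemma R_L_eq_bdf2_tail: "R_L z s = (2 + 4 * z - z powr (3/2)) / (1 + z) - bdf2_tail s"
  unfolding R_L_def bdf2_tail_def ..

lemma bdf2_kernel_lower_bound:
  fixes a b tn tm :: real
  assumes tn: "tn > 0" and tm: "tm > 0"
  defines "r \<equiv> tn / tm"
  shows "(2 + 4 * r - r powr (3/2)) / (1 + r) / tn * a\<^sup>2 - bdf2_tail r / tm * b\<^sup>2
    \<le> 2 * ((1 + 2 * r) / (tn * (1 + r)) * a - r\<^sup>2 / (tn * (1 + r)) * b) * a"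
proof -
  define q where "q = sqrt r"
  have r: "r > 0" using tn tm by (simp add: r_def)
  then have q: "q > 0" "r = q\<^sup>2" by (simp_all add: q_def)
  have "r powr (3/2) = r powr (1 + 1/2)" by simp
  also have "\<dots> = r powr 1 * r powr (1/2)" by (rule powr_add)
  also have "\<dots> = r * q" using r by (simp add: powr_half_sqrt q_def)
  finally have r32: "r powr (3/2) = r * q" .
  have tm_eq: "tm = tn / r" using tn tm by (simp add: r_def)
  define k where "k = 1 / (tn * (1 + r))"
  have k: "(1 + 2 * r) / (tn * (1 + r)) = (1 + 2 * r) * k" "r\<^sup>2 / (tn * (1 + r)) = r\<^sup>2 * k"
    "(2 + 4 * r - r powr (3/2)) / (1 + r) / tn = (2 + 4 * r - r * q) * k"
    "bdf2_tail r / tm = r\<^sup>2 * q * k"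
    unfolding k_def bdf2_tail_def r32 tm_eq using r by (simp_all add: field_simps power2_eq_square)
  have "2 * ((1 + 2 * r) * k * a - r\<^sup>2 * k * b) * a - ((2 + 4 * r - r * q) * k * a\<^sup>2 - r\<^sup>2 * q * k * b\<^sup>2)
      = k * (r * q * (a - q * b)\<^sup>2)"
    unfolding q(2) by (simp add: power2_eq_square algebra_simps)
  moreover have "0 \<le> k * (r * q * (a - q * b)\<^sup>2)" using tn r q by (simp add: k_def)
  ultimately show ?thesis unfolding k by linarith
qed

lemma bdf2_energy_first_step:
  fixes u :: "nat \<Rightarrow> grid"
  assumes u: "grid_periodic M (u 0)" "grid_periodic M (u 1)" and h: "h \<noteq> 0" and \<delta>: "\<delta> > 0"
    and \<tau>: "\<tau> 1 > 0" "\<tau> 1 \<le> 4 * \<delta> * (4 - c)"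
    and eq: "\<And>i j. i \<in> {1..int M} \<Longrightarrow> j \<in> {1..int M} \<Longrightarrow>
              D2 \<tau> u 1 i j + \<delta> * lap_h h (lap_h h (u 1)) i j - divf_h h (u 1) i j = 0"
  shows "energy M h \<delta> (u 1) + c / \<tau> 1 * sq_norm M h (\<lambda>i j. u 1 i j - u 0 i j) \<le> energy M h \<delta> (u 0)"
proof -
  let ?W = "sq_norm M h (\<lambda>i j. u 1 i j - u 0 i j)"
  have "grid_sum M h (\<lambda>i j. 2 * D2 \<tau> u 1 i j * (u 1 i j - u 0 i j)) + energy M h \<delta> (u 1)
      \<le> energy M h \<delta> (u 0) + ?W / (4 * \<delta>)"
    by (rule energy_step_ineq[OF u(2,1) h \<delta> eq])
  moreover have "grid_sum M h (\<lambda>i j. 2 * D2 \<tau> u 1 i j * (u 1 i j - u 0 i j)) = 4 / \<tau> 1 * ?W"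
    unfolding sq_norm_def grid_sum_cmult[symmetric] by (rule grid_sum_cong) (simp add: D2_def power2_eq_square)
  moreover have "c / \<tau> 1 * ?W + ?W / (4 * \<delta>) \<le> 4 / \<tau> 1 * ?W"
  proof -
    have "c / \<tau> 1 + 1 / (4 * \<delta>) = (4 * \<delta> * c + \<tau> 1) / (4 * \<delta> * \<tau> 1)"
      using \<tau> \<delta> by (simp add: field_simps)
    also have "\<dots> \<le> 16 * \<delta> / (4 * \<delta> * \<tau> 1)"
      using \<tau> \<delta> by (intro divide_right_mono) (simp_all add: algebra_simps)
    also have "\<dots> = 4 / \<tau> 1" using \<delta> by simp
    finally show ?thesis
      using mult_right_mono[OF _ sq_norm_nonneg, of "c / \<tau> 1 + 1 / (4 * \<delta>)" "4 / \<tau> 1"]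
      by (simp add: algebra_simps)
  qed
  ultimately show ?thesis by linarith
qed

lemma D2_eq_kernel:
  assumes "2 \<le> n"
  shows "D2 \<tau> u n i j = (1 + 2 * (\<tau> n / \<tau> (n - 1))) / (\<tau> n * (1 + \<tau> n / \<tau> (n - 1))) * (u n i j - u (n - 1) i j)
    - (\<tau> n / \<tau> (n - 1))\<^sup>2 / (\<tau> n * (1 + \<tau> n / \<tau> (n - 1))) * (u (n - 1) i j - u (n - 2) i j)"
  using assms unfolding D2_def Let_def by simp

lemma bdf2_energy_step:
  fixes u :: "nat \<Rightarrow> grid"
  assumes n: "2 \<le> n" and u: "grid_periodic M (u (n - 1))" "grid_periodic M (u n)"
    and h: "h \<noteq> 0" and \<delta>: "\<delta> > 0" and \<tau>: "\<tau> n > 0" "\<tau> (n - 1) > 0"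
    and step: "\<tau> n \<le> 4 * \<delta> * R_L (\<tau> n / \<tau> (n - 1)) s"
    and eq: "\<And>i j. i \<in> {1..int M} \<Longrightarrow> j \<in> {1..int M} \<Longrightarrow>
              D2 \<tau> u n i j + \<delta> * lap_h h (lap_h h (u n)) i j - divf_h h (u n) i j = 0"
  shows "energy M h \<delta> (u n) + bdf2_tail s / \<tau> n * sq_norm M h (\<lambda>i j. u n i j - u (n - 1) i j)
    \<le> energy M h \<delta> (u (n - 1))
       + bdf2_tail (\<tau> n / \<tau> (n - 1)) / \<tau> (n - 1) * sq_norm M h (\<lambda>i j. u (n - 1) i j - u (n - 2) i j)"
proof -
  define r where "r = \<tau> n / \<tau> (n - 1)"
  define A where "A = (2 + 4 * r - r powr (3/2)) / (1 + r)"
  let ?W = "sq_norm M h (\<lambda>i j. u n i j - u (n - 1) i j)"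
  let ?W' = "sq_norm M h (\<lambda>i j. u (n - 1) i j - u (n - 2) i j)"
  have "grid_sum M h (\<lambda>i j. 2 * D2 \<tau> u n i j * (u n i j - u (n - 1) i j)) + energy M h \<delta> (u n)
      \<le> energy M h \<delta> (u (n - 1)) + ?W / (4 * \<delta>)"
    by (rule energy_step_ineq[OF u(2,1) h \<delta> eq])
  moreover have "A / \<tau> n * ?W - bdf2_tail r / \<tau> (n - 1) * ?W'
      \<le> grid_sum M h (\<lambda>i j. 2 * D2 \<tau> u n i j * (u n i j - u (n - 1) i j))"
  proof -
    have "grid_sum M h (\<lambda>i j. A / \<tau> n * (u n i j - u (n - 1) i j)\<^sup>2
          - bdf2_tail r / \<tau> (n - 1) * (u (n - 1) i j - u (n - 2) i j)\<^sup>2)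
        \<le> grid_sum M h (\<lambda>i j. 2 * D2 \<tau> u n i j * (u n i j - u (n - 1) i j))"
      unfolding D2_eq_kernel[OF n] A_def r_def by (rule grid_sum_mono) (rule bdf2_kernel_lower_bound[OF \<tau>])
    then show ?thesis unfolding sq_norm_def grid_sum_diff grid_sum_cmult .
  qed
  moreover have "?W / (4 * \<delta>) \<le> R_L r s / \<tau> n * ?W"
  proof -
    have "1 / (4 * \<delta>) \<le> R_L r s / \<tau> n"
      using step \<delta> \<tau> by (simp add: r_def field_simps)
    from mult_right_mono[OF this sq_norm_nonneg[of M h "\<lambda>i j. u n i j - u (n - 1) i j"]]
    show ?thesis by simp
  qed
  moreover have "A / \<tau> n * ?W = R_L r s / \<tau> n * ?W + bdf2_tail s / \<tau> n * ?W"
    unfolding A_def R_L_eq_bdf2_tail by (simp add: algebra_simps add_divide_distrib diff_divide_distrib)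
  ultimately show ?thesis unfolding r_def by linarith
qed

lemma ratio_nonneg:
  assumes "\<forall>n\<in>{1..N}. \<tau> n > 0" "0 \<le> rN1" "k \<le> N + 1"
  shows "0 \<le> ratio \<tau> N rN1 k"
  using assms by (auto simp: ratio_def less_imp_le)

lemma R_L_ratio_1: "R_L (ratio \<tau> N rN1 1) s = 2 - bdf2_tail s"
  by (simp add: R_L_eq_bdf2_tail ratio_def)

lemma bdf2_modified_energy_le_initial:
  assumes sol: "is_bdf2_solution L \<delta> \<phi>0 M N \<tau> u" and h: "L / real M \<noteq> 0" and \<delta>: "\<delta> > 0"
    and \<tau>: "\<forall>n\<in>{1..N}. \<tau> n > 0"
    and step_restriction: "\<forall>n\<in>{1..N}. \<tau> n \<le> 4 * \<delta> * R_L (ratio \<tau> N rN1 n) (ratio \<tau> N rN1 (n + 1))"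
    and n: "n \<in> {1..N}"
  shows "energy M (L / real M) \<delta> (u n)
      + bdf2_tail (ratio \<tau> N rN1 (n + 1)) / \<tau> n * sq_norm M (L / real M) (\<lambda>i j. u n i j - u (n - 1) i j)
    \<le> energy M (L / real M) \<delta> (u 0)"
proof -
  define h where "h = L / real M"
  have per: "\<And>k. k \<le> N \<Longrightarrow> grid_periodic M (u k)"
    and eq: "\<And>k i j. k \<in> {1..N} \<Longrightarrow> i \<in> {1..int M} \<Longrightarrow> j \<in> {1..int M} \<Longrightarrow>
          D2 \<tau> u k i j + \<delta> * lap_h h (lap_h h (u k)) i j - divf_h h (u k) i j = 0"
    using sol unfolding is_bdf2_solution_def Let_def h_def by auto
  from n have "1 \<le> n" "n \<le> N" by auto
  then show ?thesis
    unfolding h_def[symmetric]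
  proof (induction n rule: dec_induct)
    case base
    have "\<tau> 1 \<le> 4 * \<delta> * (2 - bdf2_tail (ratio \<tau> N rN1 2))"
      using bspec[OF step_restriction, of 1] base R_L_ratio_1[of \<tau> N rN1] by (simp add: numeral_2_eq_2)
    then have "\<tau> 1 \<le> 4 * \<delta> * (4 - bdf2_tail (ratio \<tau> N rN1 2))" using \<delta> by (simp add: right_diff_distrib)
    then have "energy M h \<delta> (u 1) + bdf2_tail (ratio \<tau> N rN1 2) / \<tau> 1 * sq_norm M h (\<lambda>i j. u 1 i j - u 0 i j)
        \<le> energy M h \<delta> (u 0)"
      by (intro bdf2_energy_first_step) (use per eq \<tau> \<delta> h base in \<open>auto simp: h_def\<close>)
    then show ?case by (simp add: numeral_2_eq_2)
  next
    case (step k)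
    have r: "ratio \<tau> N rN1 (Suc k) = \<tau> (Suc k) / \<tau> (Suc k - 1)" using step by (simp add: ratio_def)
    have "energy M h \<delta> (u (Suc k))
        + bdf2_tail (ratio \<tau> N rN1 (Suc k + 1)) / \<tau> (Suc k) * sq_norm M h (\<lambda>i j. u (Suc k) i j - u k i j)
      \<le> energy M h \<delta> (u k) + bdf2_tail (ratio \<tau> N rN1 (Suc k)) / \<tau> k * sq_norm M h (\<lambda>i j. u k i j - u (k - 1) i j)"
      using bdf2_energy_step[of "Suc k" M u h \<delta> \<tau> "ratio \<tau> N rN1 (Suc k + 1)"] step per \<tau> eq[of "Suc k"] \<delta> h
        bspec[OF step_restriction, of "Suc k"]
      unfolding h_def r by simp
    then show ?case using step by simp
  qed
qed

lemma bdf2_energy_le_initial: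
  assumes sol: "is_bdf2_solution L \<delta> \<phi>0 M N \<tau> u" and h: "L / real M \<noteq> 0" and \<delta>: "\<delta> > 0"
    and \<tau>: "\<forall>n\<in>{1..N}. \<tau> n > 0" and rN1: "0 \<le> rN1"
    and step: "\<forall>n\<in>{1..N}. \<tau> n \<le> 4 * \<delta> * R_L (ratio \<tau> N rN1 n) (ratio \<tau> N rN1 (n + 1))"
    and n: "n \<in> {1..N}"
  shows "energy M (L / real M) \<delta> (u n) \<le> energy M (L / real M) \<delta> (u 0)"
proof -
  have "0 \<le> bdf2_tail (ratio \<tau> N rN1 (n + 1)) / \<tau> n * sq_norm M (L / real M) (\<lambda>i j. u n i j - u (n - 1) i j)"
    using \<tau> n ratio_nonneg[OF \<tau> rN1, of "n + 1"]
    by (intro mult_nonneg_nonneg divide_nonneg_nonneg bdf2_tail_nonneg sq_norm_nonneg) (auto intro: less_imp_le)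
  then show ?thesis using bdf2_modified_energy_le_initial[OF sol h \<delta> \<tau> step n] by linarith
qed

lemma energy_le_of_pointwise_bounds:
  assumes \<delta>: "\<delta> \<ge> 0"
    and K: "\<And>i j. i \<in> {1..int M} \<Longrightarrow> j \<in> {1..int M} \<Longrightarrow>
      \<bar>Dxc h v i j\<bar> \<le> K \<and> \<bar>Dyc h v i j\<bar> \<le> K \<and> \<bar>lap_h h v i j\<bar> \<le> K"
  shows "energy M h \<delta> v \<le> (h * real M)\<^sup>2 * (\<delta> * K\<^sup>2 + (2 * K\<^sup>2 + 1)\<^sup>2 / 2)"
proof -
  have sq_le: "x\<^sup>2 \<le> y\<^sup>2" if "\<bar>x\<bar> \<le> y" for x y :: real
    using that by (metis abs_ge_zero power2_abs power_mono)
  have lap: "sq_norm M h (lap_h h v) \<le> grid_sum M h (\<lambda>i j. K\<^sup>2)"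
    unfolding sq_norm_def by (rule grid_sum_mono) (use K sq_le in blast)
  have pot: "potential_energy M h v \<le> grid_sum M h (\<lambda>i j. (2 * K\<^sup>2 + 1)\<^sup>2 / 4)"
    unfolding potential_energy_def
  proof (rule grid_sum_mono)
    fix i j assume "i \<in> {1..int M}" "j \<in> {1..int M}"
    then have "(Dxc h v i j)\<^sup>2 \<le> K\<^sup>2" "(Dyc h v i j)\<^sup>2 \<le> K\<^sup>2" using K sq_le by blast+
    moreover have "0 \<le> (Dxc h v i j)\<^sup>2" "0 \<le> (Dyc h v i j)\<^sup>2" "0 \<le> K\<^sup>2" by simp_all
    ultimately have "\<bar>(Dxc h v i j)\<^sup>2 + (Dyc h v i j)\<^sup>2 - 1\<bar> \<le> 2 * K\<^sup>2 + 1"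
      unfolding abs_le_iff by (intro conjI) linarith+
    then show "((Dxc h v i j)\<^sup>2 + (Dyc h v i j)\<^sup>2 - 1)\<^sup>2 / 4 \<le> (2 * K\<^sup>2 + 1)\<^sup>2 / 4"
      using sq_le by (simp add: divide_right_mono)
  qed
  have "energy M h \<delta> v \<le> \<delta> * grid_sum M h (\<lambda>i j. K\<^sup>2) + 2 * grid_sum M h (\<lambda>i j. (2 * K\<^sup>2 + 1)\<^sup>2 / 4)"
    unfolding energy_def using lap pot \<delta> by (intro add_mono mult_left_mono) simp_all
  then show ?thesis unfolding grid_sum_const by (simp add: algebra_simps)
qed

lemma norms_le_of_energy:
  assumes \<delta>: "\<delta> > 0" and E: "energy M h \<delta> v \<le> B"
  defines "A \<equiv> (h * real M)\<^sup>2"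
  shows "l2norm M h (lap_h h v) \<le> sqrt (B / \<delta>)"
    and "grad_l4norm M h v \<le> root 4 (4 * B + 2 * A)"
    and "grad_l2norm M h v \<le> sqrt (2 * B + 3 / 2 * A)"
proof -
  have square_le_well: "x\<^sup>2 \<le> 8 * ((x - 1)\<^sup>2 / 4) + 2" for x :: real
  proof -
    have "8 * ((x - 1)\<^sup>2 / 4) + 2 - x\<^sup>2 = (x - 2)\<^sup>2" by (simp add: power2_eq_square field_simps)
    then show ?thesis using zero_le_power2[of "x - 2"] by linarith
  qed
  have le_square_mean: "x \<le> x\<^sup>2 / 2 + 1 / 2" for x :: real
  proof -
    have "x\<^sup>2 / 2 + 1 / 2 - x = (x - 1)\<^sup>2 / 2" by (simp add: power2_eq_square field_simps)
    then show ?thesis using zero_le_power2[of "x - 1"] by linarith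
  qed
  define q where "q i j = (Dxc h v i j)\<^sup>2 + (Dyc h v i j)\<^sup>2" for i j
  have "0 \<le> \<delta> * sq_norm M h (lap_h h v)" using \<delta> by (simp add: sq_norm_nonneg)
  then have lap: "\<delta> * sq_norm M h (lap_h h v) \<le> B" and pot: "2 * potential_energy M h v \<le> B"
    using E potential_energy_nonneg[of M h v] unfolding energy_def by linarith+
  show "l2norm M h (lap_h h v) \<le> sqrt (B / \<delta>)"
    unfolding l2norm_def sq_norm_def[symmetric] using lap \<delta> by (simp add: le_divide_eq mult.commute)
  have q2: "grid_sum M h (\<lambda>i j. (q i j)\<^sup>2) \<le> 4 * B + 2 * A"
  proof -
    have "grid_sum M h (\<lambda>i j. (q i j)\<^sup>2) \<le> grid_sum M h (\<lambda>i j. 8 * ((q i j - 1)\<^sup>2 / 4) + 2)"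
      using square_le_well by (intro grid_sum_mono) blast
    also have "\<dots> = 8 * potential_energy M h v + 2 * A"
      unfolding grid_sum_add grid_sum_cmult grid_sum_const potential_energy_def q_def A_def by simp
    finally show ?thesis using pot by linarith
  qed
  have "(sqrt (q i j)) ^ 4 = ((sqrt (q i j))\<^sup>2)\<^sup>2" for i j by (simp flip: power_mult)
  then have "(sqrt (q i j)) ^ 4 = (q i j)\<^sup>2" for i j by (simp add: q_def)
  then show "grad_l4norm M h v \<le> root 4 (4 * B + 2 * A)"
    unfolding grad_l4norm_def q_def[symmetric] using q2 by simp
  have "grid_sum M h q \<le> grid_sum M h (\<lambda>i j. (q i j)\<^sup>2 / 2 + 1 / 2)"
    using le_square_mean by (intro grid_sum_mono) blast
  also have "\<dots> = grid_sum M h (\<lambda>i j. (q i j)\<^sup>2) / 2 + A / 2"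
    unfolding grid_sum_add grid_sum_divide grid_sum_const A_def by simp
  finally show "grad_l2norm M h v \<le> sqrt (2 * B + 3 / 2 * A)"
    unfolding grad_l2norm_def q_def[symmetric] using q2 by simp
qed

lemma bdf2_solution_energy_bounded:
  assumes L: "L > 0" and \<delta>: "\<delta> > 0" and \<phi>: "smooth_fun \<phi>0" "periodic_L L \<phi>0"
  obtains B where "\<And>M N \<tau> rN1 u n. M \<ge> 1 \<Longrightarrow> \<forall>n\<in>{1..N}. \<tau> n > 0 \<Longrightarrow> 0 \<le> rN1 \<Longrightarrow>
    \<forall>n\<in>{1..N}. \<tau> n \<le> 4 * \<delta> * R_L (ratio \<tau> N rN1 n) (ratio \<tau> N rN1 (n + 1)) \<Longrightarrow>
    is_bdf2_solution L \<delta> \<phi>0 M N \<tau> u \<Longrightarrow> n \<in> {1..N} \<Longrightarrow> energy M (L / real M) \<delta> (u n) \<le> B"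
proof -
  obtain K where K: "\<And>M t u i j. M \<ge> 1 \<Longrightarrow> 0 \<le> t \<Longrightarrow> t \<le> 8 * \<delta> \<Longrightarrow> grid_periodic M u \<Longrightarrow>
     (\<forall>i\<in>{0..int M}. \<forall>j\<in>{0..int M}. u i j = \<phi>0 (of_int i * (L / real M), of_int j * (L / real M))
        - t / 2 * phi1 \<delta> \<phi>0 (of_int i * (L / real M), of_int j * (L / real M))) \<Longrightarrow>
     i \<in> {1..int M} \<Longrightarrow> j \<in> {1..int M} \<Longrightarrow>
     \<bar>Dxc (L / real M) u i j\<bar> \<le> K \<and> \<bar>Dyc (L / real M) u i j\<bar> \<le> K \<and> \<bar>lap_h (L / real M) u i j\<bar> \<le> K"
    using initial_level_difference_quotients_bounded[OF L \<phi>] by blast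
  show ?thesis
  proof (rule that[of "L\<^sup>2 * (\<delta> * K\<^sup>2 + (2 * K\<^sup>2 + 1)\<^sup>2 / 2)"])
    fix M N \<tau> rN1 u n
    assume M: "M \<ge> 1" and \<tau>: "\<forall>n\<in>{1..N}. \<tau> n > 0" and rN1: "0 \<le> rN1"
      and step: "\<forall>n\<in>{1..N}. \<tau> n \<le> 4 * \<delta> * R_L (ratio \<tau> N rN1 n) (ratio \<tau> N rN1 (n + 1))"
      and sol: "is_bdf2_solution L \<delta> \<phi>0 M N \<tau> u" and n: "n \<in> {1..N}"
    have h: "L / real M \<noteq> 0" "L / real M * real M = L" using L M by simp_all
    have "\<tau> 1 \<le> 4 * \<delta> * (2 - bdf2_tail (ratio \<tau> N rN1 2))"
      using bspec[OF step, of 1] n R_L_ratio_1[of \<tau> N rN1] by (simp add: numeral_2_eq_2)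
    moreover have "0 \<le> bdf2_tail (ratio \<tau> N rN1 2)"
      using n by (intro bdf2_tail_nonneg ratio_nonneg[OF \<tau> rN1]) simp
    moreover have "0 \<le> \<delta> * bdf2_tail (ratio \<tau> N rN1 2)" using \<delta> calculation(2) by simp
    ultimately have "\<tau> 1 \<le> 8 * \<delta>" by (simp add: algebra_simps)
    moreover have "\<tau> 1 > 0" using \<tau> n by simp
    ultimately have "energy M (L / real M) \<delta> (u 0) \<le> L\<^sup>2 * (\<delta> * K\<^sup>2 + (2 * K\<^sup>2 + 1)\<^sup>2 / 2)"
      using energy_le_of_pointwise_bounds[of \<delta> M "L / real M" "u 0" K] K[OF M, of "\<tau> 1" "u 0"] \<delta> sol
      unfolding is_bdf2_solution_def Let_def h(2) by simp
    then show "energy M (L / real M) \<delta> (u n) \<le> L\<^sup>2 * (\<delta> * K\<^sup>2 + (2 * K\<^sup>2 + 1)\<^sup>2 / 2)"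
      using bdf2_energy_le_initial[OF sol h(1) \<delta> \<tau> rN1 step n] by linarith
  qed
qed

lemma less_mult_min_imp_le:
  fixes t c a b :: real
  shows "t < c * min a b \<Longrightarrow> 0 \<le> c \<Longrightarrow> t \<le> c * a"
  by (metis less_imp_le min.cobounded1 mult_left_mono order_trans)

theorem lemma2p3:
  fixes L \<delta> r\<^sub>s :: real and \<phi>0 :: "real \<times> real \<Rightarrow> real"
  assumes "L > 0" and "\<delta> > 0" and "0 < r\<^sub>s" and "r\<^sub>s < 4.864"
    and "smooth_fun \<phi>0" and "periodic_L L \<phi>0"
  shows "\<exists>C0. \<forall>(M::nat) (N::nat) (\<tau>::nat \<Rightarrow> real) (rN1::real) (u::nat \<Rightarrow> grid).
           M \<ge> 1 \<longrightarrow> N \<ge> 1 \<longrightarrow>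
           (\<forall>n\<in>{1..N}. \<tau> n > 0) \<longrightarrow>
           0 < rN1 \<longrightarrow> rN1 \<le> r\<^sub>s \<longrightarrow>
           (\<forall>k\<in>{2..N}. ratio \<tau> N rN1 k \<le> r\<^sub>s) \<longrightarrow>
           (\<forall>n\<in>{1..N}. \<tau> n < 4 * \<delta> * min (R_L (ratio \<tau> N rN1 n) (ratio \<tau> N rN1 (n+1)))
                                             ((2 + ratio \<tau> N rN1 2) / (1 + ratio \<tau> N rN1 2))) \<longrightarrow>
           is_bdf2_solution L \<delta> \<phi>0 M N \<tau> u \<longrightarrow>
           (\<forall>n\<in>{1..N}. max (grad_l2norm M (L / real M) (u n))
                             (max (grad_l4norm M (L / real M) (u n)) (l2norm M (L / real M) (lap_h (L / real M) (u n))))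
                         \<le> C0)"
proof -
  obtain B where B: "\<And>M N \<tau> rN1 u n. M \<ge> 1 \<Longrightarrow> \<forall>n\<in>{1..N}. \<tau> n > 0 \<Longrightarrow> 0 \<le> rN1 \<Longrightarrow>
    \<forall>n\<in>{1..N}. \<tau> n \<le> 4 * \<delta> * R_L (ratio \<tau> N rN1 n) (ratio \<tau> N rN1 (n + 1)) \<Longrightarrow>
    is_bdf2_solution L \<delta> \<phi>0 M N \<tau> u \<Longrightarrow> n \<in> {1..N} \<Longrightarrow> energy M (L / real M) \<delta> (u n) \<le> B"
    using bdf2_solution_energy_bounded[OF assms(1,2,5,6)] by blast
  show ?thesis
  proof (intro exI[of _ "max (sqrt (2 * B + 3 / 2 * L\<^sup>2)) (max (root 4 (4 * B + 2 * L\<^sup>2)) (sqrt (B / \<delta>)))"]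
      allI impI ballI)
    fix M N \<tau> rN1 u n
    assume M: "M \<ge> 1" and \<tau>: "\<forall>n\<in>{1..N}. \<tau> n > 0" and rN1: "0 < rN1"
      and step: "\<forall>n\<in>{1..N}. \<tau> n < 4 * \<delta> * min (R_L (ratio \<tau> N rN1 n) (ratio \<tau> N rN1 (n+1)))
                                             ((2 + ratio \<tau> N rN1 2) / (1 + ratio \<tau> N rN1 2))"
      and sol: "is_bdf2_solution L \<delta> \<phi>0 M N \<tau> u" and n: "n \<in> {1..N}"
    have "\<tau> k \<le> 4 * \<delta> * R_L (ratio \<tau> N rN1 k) (ratio \<tau> N rN1 (k + 1))" if "k \<in> {1..N}" for k
      using less_mult_min_imp_le[OF bspec[OF step that]] assms(2) by simp
    then have "energy M (L / real M) \<delta> (u n) \<le> B" using B[OF M \<tau> less_imp_le[OF rN1] _ sol n] by blast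
    from norms_le_of_energy[OF assms(2) this] show "max (grad_l2norm M (L / real M) (u n))
        (max (grad_l4norm M (L / real M) (u n)) (l2norm M (L / real M) (lap_h (L / real M) (u n))))
      \<le> max (sqrt (2 * B + 3 / 2 * L\<^sup>2)) (max (root 4 (4 * B + 2 * L\<^sup>2)) (sqrt (B / \<delta>)))"
      using M by (auto simp: le_max_iff_disj)
  qed
qed

end
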